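(* If a $2$-regular curve $\gamma$ in $\mathbb{E}^4$ admits a generalized Bishop frame of type F, then it admits generalized Bishop frames of each of the types B, C and D. In particular, if $\gamma$ admits the Frenet frame, then it admits frames of all the types B, C and D.
   Context: A regular curve $\gamma: I\to\mathbb{E}^4$ ($I$ an open interval) is considered with arc-length parametrization; $\mathbb{T}=\gamma'$ is its unit tangent vector, and $\gamma$ is $2$-regular if $\mathbb{T}'$ is nowhere vanishing. A frame on $\gamma$ is an ordered orthonormal frame $(\mathbb{T},\mathbb{Z}_1,\mathbb{Z}_2,\mathbb{Z}_3)$ of smooth vector fields along $\gamma$ whose first vector is $\mathbb{T}$; it is identified with the smooth map $\mathbb{Z}: I\to O(4)$ whose rows are these vectors. Its coefficient matrix is the $\mathfrak{o}(4)$-valued function $X$ with $\mathbb{Z}'=X\mathbb{Z}$. A frame is of type B, C, D, F respectively if, after possibly permuting $\mathbb{Z}_1,\mathbb{Z}_2,\mathbb{Z}_3$ (keeping $\mathbb{T}$ first), its coefficient matrix has the respective form, for some smooth functions $x_1,x_2,x_3$ (no sign conditions): Type B: $\begin{pmatrix}0&x_1&x_2&x_3\\-x_1&0&0&0\\-x_2&0&0&0\\-x_3&0&0&0\end{pmatrix}$; Type C: $\begin{pmatrix}0&x_1&x_2&0\\-x_1&0&0&x_3\\-x_2&0&0&0\\0&-x_3&0&0\end{pmatrix}$; Type D: $\begin{pmatrix}0&x_1&0&0\\-x_1&0&x_2&x_3\\0&-x_2&0&0\\0&-x_3&0&0\end{pmatrix}$; Type F: $\begin{pmatrix}0&x_1&0&0\\-x_1&0&x_2&0\\0&-x_2&0&x_3\\0&0&-x_3&0\end{pmatrix}$.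 The Frenet frame is a frame whose coefficient matrix (without permutation) has the type F form with $x_1$ and $x_2$ positive functions. *)

theory Defs
  imports "HOL-Analysis.Analysis"
begin

text \<open>Vectors of E^4 are elements of real^4; a frame is a matrix-valued map whose
rows (indexed 1,2,3,4 of type 4; note 4 = 0 in type 4) are T, Z1, Z2, Z3.\<close>

fun vderiv_n :: "nat \<Rightarrow> (real \<Rightarrow> 'a::real_normed_vector) \<Rightarrow> real \<Rightarrow> 'a" where
  "vderiv_n 0 f = f"
| "vderiv_n (Suc n) f = (\<lambda>t. vector_derivative (vderiv_n n f) (at t))"

definition smooth_on :: "real set \<Rightarrow> (real \<Rightarrow> 'a::real_normed_vector) \<Rightarrow> bool" where
  "smooth_on S f \<longleftrightarrow>
     (\<forall>n. \<forall>t\<in>S. (vderiv_n n f has_vector_derivative vderiv_n (Suc n) f t) (at t))"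

definition open_interval :: "real set \<Rightarrow> bool" where
  "open_interval I \<longleftrightarrow> I \<noteq> {} \<and> is_interval I \<and> open I"

definition unit_speed_curve :: "real set \<Rightarrow> (real \<Rightarrow> real^4) \<Rightarrow> bool" where
  "unit_speed_curve I \<gamma> \<longleftrightarrow> open_interval I \<and> smooth_on I \<gamma> \<and>
     (\<forall>t\<in>I. norm (vector_derivative \<gamma> (at t)) = 1)"

definition two_regular :: "real set \<Rightarrow> (real \<Rightarrow> real^4) \<Rightarrow> bool" where
  "two_regular I \<gamma> \<longleftrightarrow> (\<forall>t\<in>I. vderiv_n 2 \<gamma> t \<noteq> 0)"

definition is_frame :: "real set \<Rightarrow> (real \<Rightarrow> real^4) \<Rightarrow> (real \<Rightarrow> real^4^4) \<Rightarrow> bool" where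
  "is_frame I \<gamma> Z \<longleftrightarrow> smooth_on I Z \<and>
     (\<forall>t\<in>I. orthogonal_matrix (Z t) \<and> Z t $ 1 = vector_derivative \<gamma> (at t))"

text \<open>Coefficient matrix X with Z' = X Z, i.e. X = Z' Z^T.\<close>
definition coeff_matrix :: "(real \<Rightarrow> real^4^4) \<Rightarrow> real \<Rightarrow> real^4^4" where
  "coeff_matrix Z t = vector_derivative Z (at t) ** transpose (Z t)"

definition skew4 :: "real \<Rightarrow> real \<Rightarrow> real \<Rightarrow> real \<Rightarrow> real \<Rightarrow> real \<Rightarrow> real^4^4" where
  "skew4 a12 a13 a14 a23 a24 a34 = (\<chi> i j.
     if i = 1 \<and> j = 2 then a12 else if i = 2 \<and> j = 1 then - a12 else
     if i = 1 \<and> j = 3 then a13 else if i = 3 \<and> j = 1 then - a13 else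
     if i = 1 \<and> j = 4 then a14 else if i = 4 \<and> j = 1 then - a14 else
     if i = 2 \<and> j = 3 then a23 else if i = 3 \<and> j = 2 then - a23 else
     if i = 2 \<and> j = 4 then a24 else if i = 4 \<and> j = 2 then - a24 else
     if i = 3 \<and> j = 4 then a34 else if i = 4 \<and> j = 3 then - a34 else 0)"

datatype frame_type = TypeB | TypeC | TypeD | TypeF

fun type_form :: "frame_type \<Rightarrow> real \<Rightarrow> real \<Rightarrow> real \<Rightarrow> real^4^4" where
  "type_form TypeB x1 x2 x3 = skew4 x1 x2 x3 0 0 0"
| "type_form TypeC x1 x2 x3 = skew4 x1 x2 0 0 x3 0"
| "type_form TypeD x1 x2 x3 = skew4 x1 0 0 x2 x3 0"
| "type_form TypeF x1 x2 x3 = skew4 x1 0 0 x2 0 x3"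

definition frame_of_type :: "frame_type \<Rightarrow> real set \<Rightarrow> (real \<Rightarrow> real^4) \<Rightarrow> (real \<Rightarrow> real^4^4) \<Rightarrow> bool" where
  "frame_of_type ty I \<gamma> Z \<longleftrightarrow> is_frame I \<gamma> Z \<and>
     (\<exists>p x1 x2 x3. p permutes (UNIV :: 4 set) \<and> p 1 = 1 \<and>
        smooth_on I x1 \<and> smooth_on I x2 \<and> smooth_on I x3 \<and>
        (\<forall>t\<in>I. coeff_matrix (\<lambda>s. \<chi> i. Z s $ p i) t = type_form ty (x1 t) (x2 t) (x3 t)))"

definition admits_frame_of_type :: "frame_type \<Rightarrow> real set \<Rightarrow> (real \<Rightarrow> real^4) \<Rightarrow> bool" where
  "admits_frame_of_type ty I \<gamma> \<longleftrightarrow> (\<exists>Z. frame_of_type ty I \<gamma> Z)"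

definition is_frenet_frame :: "real set \<Rightarrow> (real \<Rightarrow> real^4) \<Rightarrow> (real \<Rightarrow> real^4^4) \<Rightarrow> bool" where
  "is_frenet_frame I \<gamma> Z \<longleftrightarrow> is_frame I \<gamma> Z \<and>
     (\<exists>x1 x2 x3. smooth_on I x1 \<and> smooth_on I x2 \<and> smooth_on I x3 \<and>
        (\<forall>t\<in>I. x1 t > 0 \<and> x2 t > 0 \<and>
           coeff_matrix Z t = type_form TypeF (x1 t) (x2 t) (x3 t)))"

definition admits_frenet_frame :: "real set \<Rightarrow> (real \<Rightarrow> real^4) \<Rightarrow> bool" where
  "admits_frenet_frame I \<gamma> \<longleftrightarrow> (\<exists>Z. is_frenet_frame I \<gamma> Z)"

end

theory Submission
  imports Defs
begin

text \<open>
  Multiplying a frame \<open>Z\<close> by a smooth orthogonal \<open>R\<close> whose first row is \<open>e\<^sub>1\<close> (a rotation of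
  the normal vectors only) gives a new frame with coefficient matrix \<open>(R' + R X) R\<^sup>T\<close>.
  Type B: let \<open>R\<close> solve the linear equation \<open>R' = - R N\<close>, \<open>N\<close> the normal block of \<open>X\<close>; the
  solution (a Peano-Baker series) stays orthogonal because \<open>N\<close> is skew, and it kills the normal block.
  Type D from type F: rotate \<open>(Z\<^sub>2, Z\<^sub>3)\<close> by the angle \<open>\<theta>\<close> with \<open>\<theta>' = - x\<^sub>3\<close>.
  Type C from type B: since \<open>T'\<close> never vanishes, Sard's lemma gives a constant unit normal
  direction \<open>c\<close> never parallel to \<open>T'\<close>; a reflection turns \<open>c\<close> into the parallel field \<open>Z\<^sub>2\<close>, and
  rotating \<open>(Z\<^sub>1, Z\<^sub>3)\<close> so that \<open>Z\<^sub>1\<close> follows the component of \<open>T'\<close> orthogonal to \<open>c\<close>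
  gives type C.
\<close>

section \<open>Matrix algebra\<close>

lemma matrix_add_rdistrib: "((A::real^'n^'m) + B) ** C = A ** C + B ** C"
  by (vector matrix_matrix_mult_def sum.distrib[symmetric] field_simps)

lemma matrix_diff_rdistrib: "((A::real^'n^'m) - B) ** C = A ** C - B ** C"
  by (simp add: matrix_matrix_mult_def vec_eq_iff sum_subtractf left_diff_distrib)

lemma matrix_neg_left: "(- (A::real^'n^'m)) ** B = - (A ** B)"
  by (simp add: matrix_matrix_mult_def vec_eq_iff sum_negf)

lemma matrix_neg_right: "(A::real^'n^'m) ** (- B) = - (A ** B)"
  by (simp add: matrix_matrix_mult_def vec_eq_iff sum_negf)

lemma transpose_neg: "transpose (- (A::real^'n^'m)) = - transpose A"
  by (simp add: transpose_def vec_eq_iff)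

lemma matrix_sum_left: "sum f S ** (B::real^'p^'n) = (\<Sum>i\<in>S. (f i :: real^'n^'m) ** B)"
proof (cases "finite S")
  case True
  then show ?thesis by (induction S rule: finite_induct) (simp_all add: matrix_add_rdistrib)
qed simp

lemma bounded_bilinear_matrix_mult: "bounded_bilinear (\<lambda>(A::real^'n^'m) (B::real^'p^'n). A ** B)"
  unfolding bilinear_conv_bounded_bilinear[symmetric] bilinear_def
  by (auto intro!: linearI simp: matrix_add_ldistrib matrix_add_rdistrib matrix_scalar_ac scalar_matrix_assoc)

lemma bounded_linear_transpose: "bounded_linear (transpose :: real^'n^'m \<Rightarrow> real^'m^'n)"
  unfolding linear_conv_bounded_linear[symmetric]
  by (rule linearI) (simp_all add: transpose_def vec_eq_iff)

lemma has_vector_derivative_matrix_mult: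
  fixes R :: "real \<Rightarrow> real^'n^'m" and Z :: "real \<Rightarrow> real^'p^'n"
  assumes "(R has_vector_derivative R') (at t)" and "(Z has_vector_derivative Z') (at t)"
  shows "((\<lambda>s. R s ** Z s) has_vector_derivative R t ** Z' + R' ** Z t) (at t)"
  using bounded_bilinear.has_vector_derivative[OF bounded_bilinear_matrix_mult assms] by simp

section \<open>Iterated derivatives and smoothness\<close>

definition vderiv :: "(real \<Rightarrow> 'a::real_normed_vector) \<Rightarrow> real \<Rightarrow> 'a" where
  "vderiv f t = vector_derivative f (at t)"

fun differentiable_upto :: "nat \<Rightarrow> real set \<Rightarrow> (real \<Rightarrow> 'a::real_normed_vector) \<Rightarrow> bool" where
  "differentiable_upto 0 S f \<longleftrightarrow> True"
| "differentiable_upto (Suc n) S f \<longleftrightarrow>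
     (\<forall>t\<in>S. (f has_vector_derivative vderiv f t) (at t)) \<and> differentiable_upto n S (vderiv f)"

lemma vderiv_n_Suc: "vderiv_n (Suc n) f = vderiv (vderiv_n n f)"
  by (simp add: vderiv_def fun_eq_iff)

lemma vderiv_eqI: "(f has_vector_derivative f') (at t) \<Longrightarrow> vderiv f t = f'"
  by (simp add: vderiv_def vector_derivative_at)

lemma vderiv_const [simp]: "vderiv (\<lambda>t. c) t = 0"
  by (simp add: vderiv_eqI)

lemma vderiv_cong:
  assumes "open S" and "\<forall>s\<in>S. f s = g s" and "t \<in> S"
  shows "vderiv f t = vderiv g t"
proof -
  have "(f has_vector_derivative D) (at t) \<longleftrightarrow> (g has_vector_derivative D) (at t)" for D
    using has_vector_derivative_transform_within_open[of f D t S g]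
      has_vector_derivative_transform_within_open[of g D t S f] assms by auto
  then show ?thesis by (simp add: vderiv_def vector_derivative_def)
qed

lemma smooth_on_iff_differentiable_upto: "smooth_on S f \<longleftrightarrow> (\<forall>n. differentiable_upto n S f)"
proof
  assume smooth: "smooth_on S f"
  have "differentiable_upto n S (vderiv_n m f)" for n m
  proof (induction n arbitrary: m)
    case (Suc n)
    then show ?case
      using smooth unfolding smooth_on_def by (metis differentiable_upto.simps(2) vderiv_n_Suc)
  qed simp
  from this[of _ 0] show "\<forall>n. differentiable_upto n S f" by simp
next
  assume all: "\<forall>n. differentiable_upto n S f"
  have "differentiable_upto n S (vderiv_n m f)" for n m
  proof (induction m arbitrary: n)
    case (Suc m)
    from Suc[of "Suc n"] show ?case by (simp only: vderiv_n_Suc differentiable_upto.simps)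
  qed (use all in simp)
  then show "smooth_on S f"
    unfolding smooth_on_def by (metis differentiable_upto.simps(2) vderiv_n_Suc)
qed

lemma smooth_on_has_vector_derivative:
  "smooth_on S f \<Longrightarrow> t \<in> S \<Longrightarrow> (f has_vector_derivative vderiv f t) (at t)"
  unfolding smooth_on_iff_differentiable_upto by (metis differentiable_upto.simps(2))

lemma smooth_on_vderiv: "smooth_on S f \<Longrightarrow> smooth_on S (vderiv f)"
  unfolding smooth_on_iff_differentiable_upto by (metis differentiable_upto.simps(2))

lemma differentiable_upto_SucD: "differentiable_upto (Suc n) S f \<Longrightarrow> differentiable_upto n S f"
  by (induction n arbitrary: f) auto

lemma differentiable_upto_cong:
  assumes "open S" and "\<forall>t\<in>S. f t = g t" and "differentiable_upto n S f"
  shows "differentiable_upto n S g"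
  using assms(2,3)
proof (induction n arbitrary: f g)
  case (Suc n)
  have eq: "\<forall>t\<in>S. vderiv f t = vderiv g t" using vderiv_cong assms(1) Suc.prems(1) by blast
  have "(g has_vector_derivative vderiv g t) (at t)" if "t \<in> S" for t
    using has_vector_derivative_transform_within_open[of f "vderiv f t" t S g] Suc.prems assms(1) eq that
    by auto
  moreover have "differentiable_upto n S (vderiv g)" using Suc.IH[of "vderiv f" "vderiv g"] Suc.prems eq by simp
  ultimately show ?case by simp
qed simp

lemma differentiable_upto_SucI:
  assumes "open S" and "\<And>t. t \<in> S \<Longrightarrow> (f has_vector_derivative f' t) (at t)"
    and "differentiable_upto n S f'"
  shows "differentiable_upto (Suc n) S f"
proof -
  have "\<forall>t\<in>S. f' t = vderiv f t" using assms(2) vderiv_eqI by metis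
  then show ?thesis using assms differentiable_upto_cong by fastforce
qed

lemma differentiable_upto_const:
  assumes "open S" shows "differentiable_upto n S (\<lambda>t. c)"
proof (induction n arbitrary: c)
  case (Suc n)
  show ?case by (rule differentiable_upto_SucI[OF assms, where f'="\<lambda>t. 0"]) (simp_all add: Suc)
qed simp

lemma differentiable_upto_add:
  assumes "open S" and "differentiable_upto n S f" and "differentiable_upto n S g"
  shows "differentiable_upto n S (\<lambda>t. f t + g t)"
  using assms(2,3)
proof (induction n arbitrary: f g)
  case (Suc n)
  show ?case
    by (rule differentiable_upto_SucI[OF assms(1), where f'="\<lambda>t. vderiv f t + vderiv g t"])
      (use Suc in \<open>auto intro!: derivative_eq_intros\<close>)
qed simp

lemma differentiable_upto_bounded_linear:
  assumes L: "bounded_linear L" and "open S" and "differentiable_upto n S f"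
  shows "differentiable_upto n S (\<lambda>t. L (f t))"
  using assms(3)
proof (induction n arbitrary: f)
  case (Suc n)
  show ?case
    by (rule differentiable_upto_SucI[OF assms(2), where f'="\<lambda>t. L (vderiv f t)"])
      (use Suc bounded_linear.has_vector_derivative[OF L] in auto)
qed simp

lemma differentiable_upto_bounded_bilinear:
  fixes prod :: "'a::real_normed_vector \<Rightarrow> 'b::real_normed_vector \<Rightarrow> 'c::real_normed_vector"
  assumes B: "bounded_bilinear prod" and S: "open S"
    and "differentiable_upto n S f" and "differentiable_upto n S g"
  shows "differentiable_upto n S (\<lambda>t. prod (f t) (g t))"
  using assms(3,4)
proof (induction n arbitrary: f g)
  case (Suc n)
  have "differentiable_upto n S (\<lambda>t. prod (f t) (vderiv g t))"
    and "differentiable_upto n S (\<lambda>t. prod (vderiv f t) (g t))"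
    using Suc differentiable_upto_SucD by (metis differentiable_upto.simps(2))+
  then have "differentiable_upto n S (\<lambda>t. prod (f t) (vderiv g t) + prod (vderiv f t) (g t))"
    using differentiable_upto_add S by blast
  then show ?case
    by (rule differentiable_upto_SucI[OF S, rotated])
      (use Suc.prems bounded_bilinear.has_vector_derivative[OF B] in auto)
qed simp

lemma differentiable_upto_compose:
  fixes g f :: "real \<Rightarrow> real"
  assumes "open U" and S: "open S" and "smooth_on U g" and "differentiable_upto n S f"
    and "\<forall>t\<in>S. f t \<in> U"
  shows "differentiable_upto n S (\<lambda>t. g (f t))"
  using assms(3-5)
proof (induction n arbitrary: f g)
  case (Suc n)
  have deriv: "((\<lambda>t. g (f t)) has_vector_derivative vderiv g (f t) * vderiv f t) (at t)"
    if "t \<in> S" for t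
  proof -
    have "(g has_real_derivative vderiv g (f t)) (at (f t))"
      using smooth_on_has_vector_derivative[OF Suc.prems(1)] Suc.prems(3) that
      by (simp add: has_real_derivative_iff_has_vector_derivative)
    moreover have "(f has_real_derivative vderiv f t) (at t)"
      using Suc.prems that by (simp add: has_real_derivative_iff_has_vector_derivative)
    ultimately show ?thesis
      using DERIV_chain2 has_real_derivative_iff_has_vector_derivative by blast
  qed
  have "smooth_on U (vderiv g)" using smooth_on_vderiv Suc.prems(1) by blast
  then have "differentiable_upto n S (\<lambda>t. vderiv g (f t))"
    using Suc.IH Suc.prems differentiable_upto_SucD by blast
  moreover have "differentiable_upto n S (vderiv f)" using Suc.prems by simp
  ultimately have "differentiable_upto n S (\<lambda>t. vderiv g (f t) * vderiv f t)"
    using differentiable_upto_bounded_bilinear[OF bounded_bilinear_mult S] by blast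
  then show ?case using differentiable_upto_SucI[OF S deriv] by blast
qed simp

lemma differentiable_upto_sin_cos:
  "differentiable_upto n UNIV sin \<and> differentiable_upto n UNIV cos"
proof (induction n)
  case (Suc n)
  have "(sin has_vector_derivative cos t) (at t)" "(cos has_vector_derivative - sin t) (at t)" for t
    by (simp_all add: has_real_derivative_iff_has_vector_derivative[symmetric] DERIV_sin DERIV_cos)
  moreover have "differentiable_upto n UNIV (\<lambda>t. - sin t)"
    using differentiable_upto_bounded_linear[OF bounded_linear_minus[OF bounded_linear_ident]] Suc
    by blast
  ultimately show ?case using differentiable_upto_SucI[OF open_UNIV] Suc by metis
qed simp

lemma differentiable_upto_powr: "differentiable_upto n {0<..} (\<lambda>x::real. x powr a)"
proof (induction n arbitrary: a)
  case (Suc n)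
  have "((\<lambda>x. x powr a) has_vector_derivative a * x powr (a - 1)) (at x)" if "x \<in> {0<..}" for x
    using that has_real_derivative_powr[of x a]
    by (simp add: has_real_derivative_iff_has_vector_derivative)
  moreover have "differentiable_upto n {0<..} (\<lambda>x. a * x powr (a - 1))"
    using differentiable_upto_bounded_linear[OF bounded_linear_mult_right open_greaterThan Suc.IH] .
  ultimately show ?case by (rule differentiable_upto_SucI[OF open_greaterThan])
qed simp

lemma smooth_on_imp_continuous_on: "smooth_on S f \<Longrightarrow> continuous_on S f"
  by (metis continuous_at_imp_continuous_on has_vector_derivative_continuous
      smooth_on_has_vector_derivative)

lemma smooth_onI_has_vector_derivative:
  assumes "open S" and "\<And>t. t \<in> S \<Longrightarrow> (f has_vector_derivative f' t) (at t)" and "smooth_on S f'"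
  shows "smooth_on S f"
  using assms differentiable_upto_SucI differentiable_upto_SucD
  unfolding smooth_on_iff_differentiable_upto by metis

lemma smooth_on_const: "open S \<Longrightarrow> smooth_on S (\<lambda>t. c)"
  by (simp add: smooth_on_iff_differentiable_upto differentiable_upto_const)

lemma smooth_on_add:
  "open S \<Longrightarrow> smooth_on S f \<Longrightarrow> smooth_on S g \<Longrightarrow> smooth_on S (\<lambda>t. f t + g t)"
  by (simp add: smooth_on_iff_differentiable_upto differentiable_upto_add)

lemma smooth_on_bounded_linear:
  "bounded_linear L \<Longrightarrow> open S \<Longrightarrow> smooth_on S f \<Longrightarrow> smooth_on S (\<lambda>t. L (f t))"
  by (simp add: smooth_on_iff_differentiable_upto differentiable_upto_bounded_linear)

lemma smooth_on_bounded_bilinear: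
  fixes prod :: "'a::real_normed_vector \<Rightarrow> 'b::real_normed_vector \<Rightarrow> 'c::real_normed_vector"
  shows "bounded_bilinear prod \<Longrightarrow> open S \<Longrightarrow> smooth_on S f \<Longrightarrow> smooth_on S g \<Longrightarrow>
    smooth_on S (\<lambda>t. prod (f t) (g t))"
  by (simp add: smooth_on_iff_differentiable_upto differentiable_upto_bounded_bilinear)

lemma smooth_on_compose:
  fixes g f :: "real \<Rightarrow> real"
  shows "open U \<Longrightarrow> open S \<Longrightarrow> smooth_on U g \<Longrightarrow> smooth_on S f \<Longrightarrow> \<forall>t\<in>S. f t \<in> U \<Longrightarrow>
    smooth_on S (\<lambda>t. g (f t))"
  by (simp add: smooth_on_iff_differentiable_upto differentiable_upto_compose)

lemma smooth_on_mult:
  fixes f g :: "real \<Rightarrow> real"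
  shows "open S \<Longrightarrow> smooth_on S f \<Longrightarrow> smooth_on S g \<Longrightarrow> smooth_on S (\<lambda>t. f t * g t)"
  using smooth_on_bounded_bilinear[OF bounded_bilinear_mult] by blast

lemma smooth_on_scaleR:
  fixes f :: "real \<Rightarrow> real" and g :: "real \<Rightarrow> 'a::real_normed_vector"
  shows "open S \<Longrightarrow> smooth_on S f \<Longrightarrow> smooth_on S g \<Longrightarrow> smooth_on S (\<lambda>t. f t *\<^sub>R g t)"
  using smooth_on_bounded_bilinear[OF bounded_bilinear_scaleR] by blast

lemma smooth_on_matrix_mult:
  fixes f :: "real \<Rightarrow> real^'n^'m" and g :: "real \<Rightarrow> real^'p^'n"
  shows "open S \<Longrightarrow> smooth_on S f \<Longrightarrow> smooth_on S g \<Longrightarrow> smooth_on S (\<lambda>t. f t ** g t)"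
  using smooth_on_bounded_bilinear[OF bounded_bilinear_matrix_mult] by blast

lemma smooth_on_minus:
  fixes f :: "real \<Rightarrow> 'a::real_normed_vector"
  shows "open S \<Longrightarrow> smooth_on S f \<Longrightarrow> smooth_on S (\<lambda>t. - f t)"
  using smooth_on_bounded_linear[OF bounded_linear_minus[OF bounded_linear_ident]] by blast

lemma smooth_on_vec_nth:
  "open S \<Longrightarrow> smooth_on S (f :: real \<Rightarrow> 'a::real_normed_vector^'n) \<Longrightarrow> smooth_on S (\<lambda>t. f t $ i)"
  using smooth_on_bounded_linear[OF bounded_linear_vec_nth] by blast

lemma smooth_on_transpose:
  "open S \<Longrightarrow> smooth_on S (f :: real \<Rightarrow> real^'n^'m) \<Longrightarrow> smooth_on S (\<lambda>t. transpose (f t))"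
  using smooth_on_bounded_linear[OF bounded_linear_transpose] by blast

lemma smooth_on_sin: "smooth_on UNIV sin" and smooth_on_cos: "smooth_on UNIV cos"
  using differentiable_upto_sin_cos by (auto simp: smooth_on_iff_differentiable_upto)

lemma smooth_on_powr: "smooth_on {0<..} (\<lambda>x::real. x powr a)"
  using differentiable_upto_powr by (auto simp: smooth_on_iff_differentiable_upto)

section \<open>Linear matrix differential equations\<close>

lemma closed_subinterval_around:
  fixes I :: "real set"
  assumes "is_interval I" and "open I" and "t0 \<in> I" and "t \<in> I"
  obtains a b where "a < t0" "a < t" "t0 < b" "t < b" "{a..b} \<subseteq> I"
proof -
  have "min t0 t \<in> I" "max t0 t \<in> I" using assms by (auto simp: min_def max_def)
  then obtain d e where "d > 0" "ball (min t0 t) d \<subseteq> I" "e > 0" "ball (max t0 t) e \<subseteq> I"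
    using assms(2) open_contains_ball by meson
  then have "min t0 t - d/2 \<in> I" "max t0 t + e/2 \<in> I"
    by (auto simp: subset_iff dist_real_def)
  then have "{min t0 t - d/2 .. max t0 t + e/2} \<subseteq> I"
    using interval_subset_is_interval[OF assms(1)] by simp
  then show ?thesis
    by (rule that[rotated 4]) (use \<open>d > 0\<close> \<open>e > 0\<close> in auto)
qed

definition oriented_integral :: "real \<Rightarrow> real \<Rightarrow> (real \<Rightarrow> 'a::banach) \<Rightarrow> 'a" where
  "oriented_integral a b f = (if a \<le> b then integral {a..b} f else - integral {b..a} f)"

lemma has_vector_derivative_oriented_integral:
  fixes f :: "real \<Rightarrow> 'a::banach"
  assumes "is_interval I" and "open I" and "t0 \<in> I" and "t \<in> I" and f: "continuous_on I f"
  shows "((\<lambda>s. oriented_integral t0 s f) has_vector_derivative f t) (at t)"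
proof -
  obtain a b where ab: "a < t0" "a < t" "t0 < b" "t < b" "{a..b} \<subseteq> I"
    using closed_subinterval_around assms by metis
  have f_ab: "continuous_on {a..b} f" using f ab(5) continuous_on_subset by blast
  have eq: "oriented_integral t0 s f = integral {a..s} f - integral {a..t0} f"
    if "s \<in> {a<..<b}" for s
    using integral_minus_sets[of a s t0 f] that ab
      integrable_continuous_interval[OF continuous_on_subset[OF f_ab]]
    by (auto simp: oriented_integral_def max_def)
  have "((\<lambda>u. integral {a..u} f) has_vector_derivative f t) (at t within {a..b})"
    using integral_has_vector_derivative[OF f_ab] ab by auto
  then have "((\<lambda>u. integral {a..u} f) has_vector_derivative f t) (at t)"
    using at_within_interior[of t "{a..b}"] ab by simp
  then have "((\<lambda>u. integral {a..u} f - integral {a..t0} f) has_vector_derivative f t) (at t)"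
    using has_vector_derivative_diff[OF _ has_vector_derivative_const] by fastforce
  then show ?thesis
    by (rule has_vector_derivative_transform_within_open[of _ _ _ "{a<..<b}"]) (use ab eq in auto)
qed

lemma norm_oriented_integral_le_power:
  fixes f :: "real \<Rightarrow> 'a::banach"
  assumes f: "continuous_on (closed_segment t0 t) f"
    and bound: "\<And>s. s \<in> closed_segment t0 t \<Longrightarrow> norm (f s) \<le> C * \<bar>s - t0\<bar> ^ k"
  shows "norm (oriented_integral t0 t f) \<le> C * \<bar>t - t0\<bar> ^ Suc k / Suc k"
proof (cases "t0 \<le> t")
  case True
  have "((\<lambda>s. C * (s - t0) ^ Suc k / Suc k) has_real_derivative C * (x - t0) ^ k) (at x within S)"
    for x S
    by (auto intro!: derivative_eq_intros simp del: of_nat_Suc power_Suc)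
  then have primitive: "((\<lambda>s. C * (s - t0) ^ k) has_integral C * (t - t0) ^ Suc k / Suc k) {t0..t}"
    using fundamental_theorem_of_calculus[OF True, of "\<lambda>s. C * (s - t0) ^ Suc k / Suc k"]
    by (simp add: has_real_derivative_iff_has_vector_derivative)
  have "norm (oriented_integral t0 t f) = norm (integral {t0..t} f)"
    using True by (simp add: oriented_integral_def)
  also have "\<dots> \<le> integral {t0..t} (\<lambda>s. C * (s - t0) ^ k)"
    using True f bound integrable_continuous_interval primitive
    by (intro integral_norm_bound_integral) (auto simp: closed_segment_eq_real_ivl)
  also have "\<dots> = C * \<bar>t - t0\<bar> ^ Suc k / Suc k"
    using True integral_unique[OF primitive] by simp
  finally show ?thesis .
next
  case False
  have "((\<lambda>s. - C * (t0 - s) ^ Suc k / Suc k) has_real_derivative C * (t0 - x) ^ k) (at x within S)"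
    for x S
    by (auto intro!: derivative_eq_intros simp del: of_nat_Suc power_Suc)
  then have primitive: "((\<lambda>s. C * (t0 - s) ^ k) has_integral C * (t0 - t) ^ Suc k / Suc k) {t..t0}"
    using False fundamental_theorem_of_calculus[of t t0 "\<lambda>s. - C * (t0 - s) ^ Suc k / Suc k"]
    by (simp add: has_real_derivative_iff_has_vector_derivative)
  have "norm (oriented_integral t0 t f) = norm (integral {t..t0} f)"
    using False by (simp add: oriented_integral_def)
  also have "\<dots> \<le> integral {t..t0} (\<lambda>s. C * (t0 - s) ^ k)"
    using False f bound integrable_continuous_interval primitive
    by (intro integral_norm_bound_integral) (auto simp: closed_segment_eq_real_ivl abs_minus_commute)
  also have "\<dots> = C * \<bar>t - t0\<bar> ^ Suc k / Suc k"
    using False integral_unique[OF primitive] by (simp add: abs_minus_commute)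
  finally show ?thesis .
qed

lemma has_vector_derivative_series:
  fixes f f' :: "nat \<Rightarrow> real \<Rightarrow> 'a::banach"
  assumes "convex S"
    and "\<And>n x. x \<in> S \<Longrightarrow> (f n has_vector_derivative f' n x) (at x within S)"
    and "uniform_limit S (\<lambda>n x. \<Sum>i<n. f' i x) g' sequentially"
    and "x0 \<in> S" and "(\<lambda>n. f n x0) sums l"
  shows "\<exists>g. \<forall>x\<in>S. (\<lambda>n. f n x) sums g x \<and> (g has_vector_derivative g' x) (at x within S)"
proof -
  have "\<exists>g. \<forall>x\<in>S. (\<lambda>n. f n x) sums g x \<and> (g has_derivative (\<lambda>h. h *\<^sub>R g' x)) (at x within S)"
  proof (rule has_derivative_series[where f'="\<lambda>n x h. h *\<^sub>R f' n x" and x=x0])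
    show "convex S" "x0 \<in> S" "(\<lambda>n. f n x0) sums l" by (fact assms)+
    show "(f n has_derivative (\<lambda>h. h *\<^sub>R f' n x)) (at x within S)" if "x \<in> S" for n x
      using assms(2)[OF that] by (simp add: has_vector_derivative_def)
  next
    fix e :: real assume "e > 0"
    with assms(3) have "\<forall>\<^sub>F n in sequentially. \<forall>x\<in>S. dist (\<Sum>i<n. f' i x) (g' x) < e"
      by (rule uniform_limitD)
    then show "\<forall>\<^sub>F n in sequentially. \<forall>x\<in>S. \<forall>h.
        norm ((\<Sum>i<n. h *\<^sub>R f' i x) - h *\<^sub>R g' x) \<le> e * norm h"
    proof eventually_elim
      case (elim n)
      have "norm ((\<Sum>i<n. h *\<^sub>R f' i x) - h *\<^sub>R g' x) = \<bar>h\<bar> * dist (\<Sum>i<n. f' i x) (g' x)" for x h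
        by (simp add: dist_norm scaleR_sum_right[symmetric] scaleR_diff_right[symmetric])
      then show ?case
        using elim by (simp add: mult.commute[of e] mult_left_mono less_imp_le)
    qed
  qed
  then show ?thesis by (simp add: has_vector_derivative_def)
qed

lemma uniform_limit_matrix_mult_right:
  fixes f :: "'i \<Rightarrow> 'a \<Rightarrow> real^'n^'m" and A :: "'a \<Rightarrow> real^'p^'n"
  assumes "uniform_limit S f l F" and A: "\<forall>x\<in>S. norm (A x) \<le> M"
  shows "uniform_limit S (\<lambda>n x. f n x ** A x) (\<lambda>x. l x ** A x) F"
proof (rule uniform_limitI)
  fix e :: real assume "e > 0"
  obtain K where K: "K > 0" "\<And>(X :: real^'n^'m) (Y :: real^'p^'n). norm (X ** Y) \<le> norm X * norm Y * K"
    using bounded_bilinear.pos_bounded[OF bounded_bilinear_matrix_mult] by blast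
  define C where "C = (\<bar>M\<bar> + 1) * K"
  have "C > 0" using K(1) by (simp add: C_def add_pos_nonneg)
  with assms(1) \<open>e > 0\<close> have "\<forall>\<^sub>F n in F. \<forall>x\<in>S. dist (f n x) (l x) < e / C"
    by (simp add: uniform_limitD)
  then show "\<forall>\<^sub>F n in F. \<forall>x\<in>S. dist (f n x ** A x) (l x ** A x) < e"
  proof eventually_elim
    case (elim n)
    show ?case
    proof
      fix x assume x: "x \<in> S"
      have "dist (f n x ** A x) (l x ** A x) \<le> dist (f n x) (l x) * (norm (A x) * K)"
        using K(2)[of "f n x - l x" "A x"] by (simp add: dist_norm matrix_diff_rdistrib mult.assoc)
      also have "\<dots> \<le> dist (f n x) (l x) * C"
        using A x K(1) by (intro mult_left_mono) (auto simp: C_def)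
      also have "\<dots> < e" using elim x \<open>C > 0\<close> by (simp add: pos_less_divide_eq)
      finally show "dist (f n x ** A x) (l x ** A x) < e" .
    qed
  qed
qed

primrec peano_baker_term :: "real \<Rightarrow> (real \<Rightarrow> real^'n^'n) \<Rightarrow> nat \<Rightarrow> real \<Rightarrow> real^'n^'n" where
  "peano_baker_term t0 A 0 = (\<lambda>t. mat 1)"
| "peano_baker_term t0 A (Suc k) =
     (\<lambda>t. oriented_integral t0 t (\<lambda>s. peano_baker_term t0 A k s ** A s))"

context
  fixes I :: "real set" and t0 :: real and A :: "real \<Rightarrow> real^'n^'n"
  assumes I: "is_interval I" "open I" "t0 \<in> I" and A: "continuous_on I A"
begin

lemma continuous_on_peano_baker_term: "continuous_on I (peano_baker_term t0 A k)"
proof (induction k)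
  case (Suc k)
  have "continuous_on I (\<lambda>s. peano_baker_term t0 A k s ** A s)"
    using bounded_bilinear.continuous_on[OF bounded_bilinear_matrix_mult Suc A] .
  then have "\<forall>t\<in>I. (peano_baker_term t0 A (Suc k) has_vector_derivative
      peano_baker_term t0 A k t ** A t) (at t)"
    using has_vector_derivative_oriented_integral[OF I] by auto
  then show ?case
    using has_vector_derivative_continuous continuous_at_imp_continuous_on by blast
qed simp

lemma has_vector_derivative_peano_baker_term:
  "t \<in> I \<Longrightarrow>
    (peano_baker_term t0 A (Suc k) has_vector_derivative peano_baker_term t0 A k t ** A t) (at t)"
  using has_vector_derivative_oriented_integral[OF I _ bounded_bilinear.continuous_on
      [OF bounded_bilinear_matrix_mult continuous_on_peano_baker_term A]]
  by simp

lemma norm_peano_baker_term_le: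
  assumes ab: "{a..b} \<subseteq> I" "t0 \<in> {a..b}" and M: "\<forall>s\<in>{a..b}. norm (A s) \<le> M"
    and K: "\<And>(X :: real^'n^'n) (Y :: real^'n^'n). norm (X ** Y) \<le> norm X * norm Y * K" and "K \<ge> 0"
    and "t \<in> {a..b}"
  shows "norm (peano_baker_term t0 A k t)
    \<le> norm (mat 1 :: real^'n^'n) * (K * M) ^ k * \<bar>t - t0\<bar> ^ k / fact k"
  using \<open>t \<in> {a..b}\<close>
proof (induction k arbitrary: t)
  case (Suc k)
  define C where "C = norm (mat 1 :: real^'n^'n) * (K * M) ^ k / fact k * M * K"
  have "M \<ge> 0" using M ab(2) norm_ge_zero order_trans by blast
  have segment: "closed_segment t0 t \<subseteq> {a..b}"
    using Suc.prems ab(2) by (simp add: closed_segment_subset)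
  have bound: "norm (peano_baker_term t0 A k s ** A s) \<le> C * \<bar>s - t0\<bar> ^ k"
    if "s \<in> closed_segment t0 t" for s
  proof -
    have s: "s \<in> {a..b}" using segment that by blast
    have "norm (peano_baker_term t0 A k s ** A s) \<le> norm (peano_baker_term t0 A k s) * norm (A s) * K"
      by (rule K(1))
    also have "\<dots> \<le> (norm (mat 1 :: real^'n^'n) * (K * M) ^ k * \<bar>s - t0\<bar> ^ k / fact k) * M * K"
      using Suc.IH[OF s] M s \<open>M \<ge> 0\<close> \<open>K \<ge> 0\<close> by (intro mult_right_mono mult_mono) auto
    also have "\<dots> = C * \<bar>s - t0\<bar> ^ k" by (simp add: C_def)
    finally show ?thesis .
  qed
  have continuous: "continuous_on (closed_segment t0 t) (\<lambda>s. peano_baker_term t0 A k s ** A s)"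
    using segment ab(1) bounded_bilinear.continuous_on[OF bounded_bilinear_matrix_mult
        continuous_on_peano_baker_term A] continuous_on_subset by blast
  have "norm (peano_baker_term t0 A (Suc k) t) \<le> C * \<bar>t - t0\<bar> ^ Suc k / Suc k"
    using norm_oriented_integral_le_power[OF continuous bound] by simp
  also have "\<dots> = norm (mat 1 :: real^'n^'n) * (K * M) ^ Suc k * \<bar>t - t0\<bar> ^ Suc k / fact (Suc k)"
    by (simp add: C_def field_simps)
  finally show ?case .
qed simp

lemma uniform_limit_peano_baker_series:
  assumes ab: "{a..b} \<subseteq> I" "t0 \<in> {a..b}"
  shows "uniform_limit {a..b} (\<lambda>n s. \<Sum>i<n. peano_baker_term t0 A i s)
    (\<lambda>s. \<Sum>i. peano_baker_term t0 A i s) sequentially"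
proof -
  obtain K where K: "K > 0" "\<And>(X :: real^'n^'n) (Y :: real^'n^'n). norm (X ** Y) \<le> norm X * norm Y * K"
    using bounded_bilinear.pos_bounded[OF bounded_bilinear_matrix_mult] by blast
  obtain M where M: "M > 0" "\<forall>s\<in>{a..b}. norm (A s) \<le> M"
    using compact_continuous_image[OF continuous_on_subset[OF A ab(1)]]
    by (metis compact_imp_bounded bounded_pos compact_Icc image_eqI)
  define B where "B n = norm (mat 1 :: real^'n^'n) * (inverse (fact n) * (K * M * (b - a)) ^ n)" for n
  have "summable B" unfolding B_def by (intro summable_mult summable_exp)
  moreover have "norm (peano_baker_term t0 A n s) \<le> B n" if s: "s \<in> {a..b}" for n s
  proof -
    have "\<bar>s - t0\<bar> ^ n \<le> (b - a) ^ n"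
      using s ab(2) by (intro power_mono) auto
    then have "norm (peano_baker_term t0 A n s) \<le> norm (mat 1 :: real^'n^'n) * (K * M) ^ n * (b - a) ^ n / fact n"
      using norm_peano_baker_term_le[OF ab M(2) K(2) less_imp_le[OF K(1)] s] K M
      by (smt (verit) divide_right_mono mult_left_mono norm_ge_zero fact_ge_zero zero_le_power mult_nonneg_nonneg)
    also have "\<dots> = B n" by (simp add: B_def power_mult_distrib divide_inverse mult_ac)
    finally show ?thesis .
  qed
  ultimately show ?thesis by (intro Weierstrass_m_test)
qed

lemma has_vector_derivative_peano_baker_series:
  assumes "t \<in> I"
  shows "((\<lambda>t. \<Sum>n. peano_baker_term t0 A n t) has_vector_derivative
    (\<Sum>n. peano_baker_term t0 A n t) ** A t) (at t)"
proof -
  let ?P = "peano_baker_term t0 A"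
  obtain a b where ab: "a < t0" "a < t" "t0 < b" "t < b" "{a..b} \<subseteq> I"
    using closed_subinterval_around I assms by metis
  obtain M where M: "\<forall>s\<in>{a..b}. norm (A s) \<le> M"
    using compact_continuous_image[OF continuous_on_subset[OF A ab(5)]]
    by (metis compact_imp_bounded bounded_iff compact_Icc image_eqI)
  have unif: "uniform_limit {a..b} (\<lambda>n x. \<Sum>i<n. ?P i x ** A x) (\<lambda>x. (\<Sum>i. ?P i x) ** A x) sequentially"
    using uniform_limit_matrix_mult_right[OF uniform_limit_peano_baker_series M] ab
    by (simp add: matrix_sum_left)
  have deriv: "(?P (Suc n) has_vector_derivative ?P n x ** A x) (at x within {a..b})"
    if "x \<in> {a..b}" for n x
    using has_vector_derivative_peano_baker_term that ab(5) has_vector_derivative_at_within by blast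
  have "convex {a..b}" "t0 \<in> {a..b}" "(\<lambda>n. ?P (Suc n) t0) sums 0"
    using ab by (auto simp: oriented_integral_def)
  from has_vector_derivative_series[OF this(1) deriv unif this(2,3)]
  obtain g where g: "\<forall>x\<in>{a..b}. (\<lambda>n. ?P (Suc n) x) sums g x
      \<and> (g has_vector_derivative (\<Sum>i. ?P i x) ** A x) (at x within {a..b})"
    by blast
  have series: "(\<Sum>n. ?P n x) = g x + mat 1" if "x \<in> {a..b}" for x
  proof -
    have "(\<lambda>n. ?P n x) sums (g x + ?P 0 x)"
      by (rule sums_Suc_iff[THEN iffD1]) (use g that in blast)
    then show ?thesis by (simp add: sums_iff)
  qed
  have t: "t \<in> {a..b}" using ab by simp
  then have "((\<lambda>x. g x + mat 1) has_vector_derivative (\<Sum>i. ?P i t) ** A t) (at t within {a..b})"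
    using g by (simp add: has_vector_derivative_add_const)
  then have "((\<lambda>x. \<Sum>n. ?P n x) has_vector_derivative (\<Sum>i. ?P i t) ** A t) (at t within {a..b})"
    by (rule has_vector_derivative_transform[OF t, rotated]) (rule series)
  then show ?thesis
    using at_within_interior[of t "{a..b}"] ab by simp
qed

lemma linear_matrix_ode_exists: "\<exists>R. R t0 = mat 1 \<and> (\<forall>t\<in>I. (R has_vector_derivative R t ** A t) (at t))"
proof -
  have "(\<lambda>n. peano_baker_term t0 A (Suc n) t0) sums 0" by (simp add: oriented_integral_def)
  then have "(\<lambda>n. peano_baker_term t0 A n t0) sums (0 + peano_baker_term t0 A 0 t0)"
    by (rule sums_Suc_iff[THEN iffD1])
  then have "(\<Sum>n. peano_baker_term t0 A n t0) = mat 1" by (simp add: sums_iff)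
  then show ?thesis
    by (intro exI[of _ "\<lambda>t. \<Sum>n. peano_baker_term t0 A n t"])
      (simp add: has_vector_derivative_peano_baker_series)
qed

end

lemma smooth_on_linear_matrix_ode:
  fixes A R :: "real \<Rightarrow> real^'n^'n"
  assumes I: "open I" and A: "smooth_on I A"
    and R: "\<forall>t\<in>I. (R has_vector_derivative R t ** A t) (at t)"
  shows "smooth_on I R"
  unfolding smooth_on_iff_differentiable_upto
proof
  fix n show "differentiable_upto n I R"
  proof (induction n)
    case (Suc n)
    have "differentiable_upto n I (\<lambda>t. R t ** A t)"
      using differentiable_upto_bounded_bilinear[OF bounded_bilinear_matrix_mult I Suc] A
      unfolding smooth_on_iff_differentiable_upto by blast
    then show ?case using R by (intro differentiable_upto_SucI[OF I]) auto
  qed simp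
qed

lemma orthogonal_matrix_linear_ode:
  fixes A R :: "real \<Rightarrow> real^'n^'n"
  assumes I: "is_interval I" "t0 \<in> I" and R0: "orthogonal_matrix (R t0)"
    and R: "\<forall>t\<in>I. (R has_vector_derivative R t ** A t) (at t)"
    and skew: "\<forall>t\<in>I. transpose (A t) = - A t"
    and "t \<in> I"
  shows "orthogonal_matrix (R t)"
proof -
  have "((\<lambda>s. R s ** transpose (R s)) has_derivative (\<lambda>h. 0)) (at s within I)" if s: "s \<in> I" for s
  proof -
    have "((\<lambda>s. R s ** transpose (R s)) has_vector_derivative
        R s ** transpose (R s ** A s) + (R s ** A s) ** transpose (R s)) (at s)"
      using has_vector_derivative_matrix_mult[OF _ bounded_linear.has_vector_derivative
          [OF bounded_linear_transpose]] R s by blast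
    moreover have "R s ** transpose (R s ** A s) + (R s ** A s) ** transpose (R s) = 0"
      using skew s by (simp add: matrix_transpose_mul matrix_mul_assoc matrix_neg_left matrix_neg_right)
    ultimately show ?thesis
      by (simp add: has_vector_derivative_def has_derivative_at_withinI)
  qed
  then obtain C where "\<forall>s\<in>I. R s ** transpose (R s) = C"
    using has_derivative_zero_constant[OF is_interval_convex[OF I(1)]] by blast
  then have "R t ** transpose (R t) = R t0 ** transpose (R t0)"
    using I(2) \<open>t \<in> I\<close> by simp
  then show ?thesis
    using R0 matrix_left_right_inverse by (auto simp: orthogonal_matrix_def)
qed

section \<open>Frames and their coefficient matrices\<close>

lemma coeff_matrix_vderiv: "coeff_matrix Z t = vderiv Z t ** transpose (Z t)"
  by (simp add: coeff_matrix_def vderiv_def)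

lemma smooth_on_coeff_matrix:
  assumes "open I" and "is_frame I \<gamma> Z"
  shows "smooth_on I (coeff_matrix Z)"
proof -
  have "smooth_on I (\<lambda>t. vderiv Z t ** transpose (Z t))"
    using assms by (intro smooth_on_matrix_mult smooth_on_vderiv smooth_on_transpose)
      (auto simp: is_frame_def)
  then show ?thesis by (simp add: coeff_matrix_vderiv[abs_def])
qed

lemma smooth_on_coeff_matrix_entry:
  "open I \<Longrightarrow> is_frame I \<gamma> Z \<Longrightarrow> smooth_on I (\<lambda>t. coeff_matrix Z t $ i $ j)"
  by (intro smooth_on_vec_nth smooth_on_coeff_matrix)

lemma coeff_matrix_skew_symmetric:
  assumes I: "open I" and Z: "smooth_on I Z" "\<forall>s\<in>I. orthogonal_matrix (Z s)" and t: "t \<in> I"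
  shows "transpose (coeff_matrix Z t) = - coeff_matrix Z t"
proof -
  have dZ: "(Z has_vector_derivative vderiv Z t) (at t)"
    using smooth_on_has_vector_derivative[OF Z(1) t] .
  have "((\<lambda>s. Z s ** transpose (Z s)) has_vector_derivative
      Z t ** transpose (vderiv Z t) + vderiv Z t ** transpose (Z t)) (at t)"
    using has_vector_derivative_matrix_mult[OF dZ
        bounded_linear.has_vector_derivative[OF bounded_linear_transpose dZ]] .
  moreover have "((\<lambda>s. Z s ** transpose (Z s)) has_vector_derivative 0) (at t)"
    using Z(2) by (intro has_vector_derivative_transform_within_open[OF
          has_vector_derivative_const[of "mat 1"] I t]) (simp add: orthogonal_matrix_def)
  ultimately have "Z t ** transpose (vderiv Z t) + vderiv Z t ** transpose (Z t) = 0"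
    using vector_derivative_unique_at by blast
  then show ?thesis
    by (simp add: coeff_matrix_vderiv matrix_transpose_mul eq_neg_iff_add_eq_0 add.commute)
qed

lemma skew4_entries:
  fixes M :: "real^4^4"
  assumes "transpose M = - M"
  shows "M = skew4 (M$1$2) (M$1$3) (M$1$4) (M$2$3) (M$2$4) (M$3$4)"
proof -
  have skew: "M$i$j = - M$j$i" for i j
    using arg_cong[OF assms, of "\<lambda>N. N $ j $ i"] by (simp add: transpose_def)
  have diag: "M$i$i = 0" for i using skew[of i i] by linarith
  show ?thesis
    unfolding vec_eq_iff forall_4 skew4_def
    using diag skew[of 2 1] skew[of 3 1] skew[of 4 1] skew[of 3 2] skew[of 4 2] skew[of 4 3]
    by simp
qed

lemma coeff_matrix_skew4:
  assumes "open I" and "is_frame I \<gamma> W" and "t \<in> I"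
  shows "coeff_matrix W t = skew4 (coeff_matrix W t $1$2) (coeff_matrix W t $1$3)
    (coeff_matrix W t $1$4) (coeff_matrix W t $2$3) (coeff_matrix W t $2$4) (coeff_matrix W t $3$4)"
  using assms by (intro skew4_entries coeff_matrix_skew_symmetric) (auto simp: is_frame_def)

lemma matrix_mult_row1_axis:
  assumes "(R::real^4^4) $ 1 = axis 1 1"
  shows "(R ** Z) $ 1 = Z $ 1"
  using assms by (simp add: matrix_matrix_mult_def vec_eq_iff axis_def mult_if_delta)

definition normal_rotation :: "real set \<Rightarrow> (real \<Rightarrow> real^4^4) \<Rightarrow> bool" where
  "normal_rotation I R \<longleftrightarrow> smooth_on I R \<and> (\<forall>t\<in>I. orthogonal_matrix (R t) \<and> R t $ 1 = axis 1 1)"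

lemma is_frame_normal_rotation:
  assumes "open I" and Z: "is_frame I \<gamma> Z" and R: "normal_rotation I R"
  shows "is_frame I \<gamma> (\<lambda>t. R t ** Z t)"
  unfolding is_frame_def
proof (intro conjI ballI)
  show "smooth_on I (\<lambda>t. R t ** Z t)"
    using assms smooth_on_matrix_mult by (auto simp: is_frame_def normal_rotation_def)
  fix t assume "t \<in> I"
  then have "orthogonal_matrix (R t)" "R t $ 1 = axis 1 1"
    "orthogonal_matrix (Z t)" "Z t $ 1 = vector_derivative \<gamma> (at t)"
    using Z R by (simp_all add: is_frame_def normal_rotation_def)
  then show "orthogonal_matrix (R t ** Z t)" and "(R t ** Z t) $ 1 = vector_derivative \<gamma> (at t)"
    by (simp_all add: orthogonal_matrix_mul matrix_mult_row1_axis)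
qed

lemma coeff_matrix_normal_rotation:
  assumes "open I" and Z: "is_frame I \<gamma> Z" and R: "normal_rotation I R" and t: "t \<in> I"
  shows "coeff_matrix (\<lambda>t. R t ** Z t) t = (vderiv R t + R t ** coeff_matrix Z t) ** transpose (R t)"
proof -
  have "((\<lambda>s. R s ** Z s) has_vector_derivative R t ** vderiv Z t + vderiv R t ** Z t) (at t)"
    using Z R t by (intro has_vector_derivative_matrix_mult smooth_on_has_vector_derivative)
      (auto simp: is_frame_def normal_rotation_def)
  then have "coeff_matrix (\<lambda>t. R t ** Z t) t
      = (R t ** vderiv Z t + vderiv R t ** Z t) ** (transpose (Z t) ** transpose (R t))"
    by (simp add: coeff_matrix_vderiv vderiv_eqI matrix_transpose_mul)
  also have "\<dots> = R t ** (vderiv Z t ** transpose (Z t)) ** transpose (R t)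
      + vderiv R t ** (Z t ** transpose (Z t)) ** transpose (R t)"
    by (simp add: matrix_add_rdistrib matrix_mul_assoc)
  also have "Z t ** transpose (Z t) = mat 1"
    using Z t by (simp add: is_frame_def orthogonal_matrix_def)
  finally show ?thesis
    by (simp add: coeff_matrix_vderiv matrix_add_rdistrib)
qed

definition normal_block_zero :: "real^4^4 \<Rightarrow> bool" where
  "normal_block_zero M \<longleftrightarrow> (\<forall>i j. i \<noteq> 1 \<longrightarrow> j \<noteq> 1 \<longrightarrow> M $ i $ j = 0)"

lemma frame_of_typeI:
  assumes "is_frame I \<gamma> W" and "smooth_on I x1" "smooth_on I x2" "smooth_on I x3"
    and "\<forall>t\<in>I. coeff_matrix W t = type_form ty (x1 t) (x2 t) (x3 t)"
  shows "frame_of_type ty I \<gamma> W"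
  unfolding frame_of_type_def
  using assms by (intro conjI exI[of _ id] exI[of _ x1] exI[of _ x2] exI[of _ x3]) (auto simp: permutes_id)

lemma frame_of_typeE:
  assumes I: "open I" and "frame_of_type ty I \<gamma> Z"
  obtains W x1 x2 x3 where "is_frame I \<gamma> W" "smooth_on I x1" "smooth_on I x2" "smooth_on I x3"
    "\<forall>t\<in>I. coeff_matrix W t = type_form ty (x1 t) (x2 t) (x3 t)"
proof -
  obtain p x1 x2 x3 where Z: "is_frame I \<gamma> Z" and p: "p permutes (UNIV :: 4 set)" "p 1 = 1"
    and x: "smooth_on I x1" "smooth_on I x2" "smooth_on I x3"
    and coeff: "\<forall>t\<in>I. coeff_matrix (\<lambda>s. \<chi> i. Z s $ p i) t = type_form ty (x1 t) (x2 t) (x3 t)"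
    using assms(2) unfolding frame_of_type_def by blast
  define P :: "real^4^4" where "P = (\<chi> i j. if j = p i then 1 else 0)"
  have P_mult: "P ** M = (\<chi> i. M $ p i)" for M :: "real^4^4"
    by (simp add: P_def matrix_matrix_mult_def vec_eq_iff mult_if_delta)
  have "P ** transpose P = mat 1"
    using permutes_inj[OF p(1)]
    by (simp add: P_def matrix_matrix_mult_def transpose_def mat_def vec_eq_iff mult_if_delta
        inj_eq)
  then have "orthogonal_matrix P"
    using matrix_left_right_inverse unfolding orthogonal_matrix_def by blast
  moreover have "P $ 1 = axis 1 1"
    using p(2) by (simp add: P_def axis_def vec_eq_iff)
  ultimately have "normal_rotation I (\<lambda>t. P)"
    using I by (simp add: normal_rotation_def smooth_on_const)
  from is_frame_normal_rotation[OF I Z this] have "is_frame I \<gamma> (\<lambda>s. \<chi> i. Z s $ p i)"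
    by (simp add: P_mult)
  then show ?thesis using that x coeff by blast
qed

lemma frame_of_type_coeff_entries:
  assumes "open I" and "is_frame I \<gamma> W"
    and "\<forall>t\<in>I. coeff_matrix W t = type_form ty (coeff_matrix W t $ i $ j)
      (coeff_matrix W t $ k $ l) (coeff_matrix W t $ m $ n)"
  shows "frame_of_type ty I \<gamma> W"
  using frame_of_typeI[OF assms(2) smooth_on_coeff_matrix_entry[OF assms(1,2)]
      smooth_on_coeff_matrix_entry[OF assms(1,2)] smooth_on_coeff_matrix_entry[OF assms(1,2)] assms(3)] .

lemma frame_of_TypeBI:
  assumes "open I" and "is_frame I \<gamma> W" and "\<forall>t\<in>I. normal_block_zero (coeff_matrix W t)"
  shows "frame_of_type TypeB I \<gamma> W"
  by (rule frame_of_type_coeff_entries[where i=1 and j=2 and k=1 and l=3 and m=1 and n=4])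
    (use assms coeff_matrix_skew4[OF assms(1,2)] in \<open>simp_all add: normal_block_zero_def\<close>)

lemma frame_of_TypeCI:
  assumes "open I" and "is_frame I \<gamma> W"
    and "\<forall>t\<in>I. coeff_matrix W t $1$4 = 0 \<and> coeff_matrix W t $2$3 = 0 \<and> coeff_matrix W t $3$4 = 0"
  shows "frame_of_type TypeC I \<gamma> W"
  by (rule frame_of_type_coeff_entries[where i=1 and j=2 and k=1 and l=3 and m=2 and n=4])
    (use assms coeff_matrix_skew4[OF assms(1,2)] in simp_all)

lemma frame_of_TypeDI:
  assumes "open I" and "is_frame I \<gamma> W"
    and "\<forall>t\<in>I. coeff_matrix W t $1$3 = 0 \<and> coeff_matrix W t $1$4 = 0 \<and> coeff_matrix W t $3$4 = 0"
  shows "frame_of_type TypeD I \<gamma> W"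
  by (rule frame_of_type_coeff_entries[where i=1 and j=2 and k=2 and l=3 and m=2 and n=4])
    (use assms coeff_matrix_skew4[OF assms(1,2)] in simp_all)

lemma vderiv_2_eq_coeff_matrix_row1:
  assumes I: "open I" and W: "is_frame I \<gamma> W" and t: "t \<in> I"
  shows "vderiv_n 2 \<gamma> t = (coeff_matrix W t ** W t) $ 1"
proof -
  have "vderiv_n 2 \<gamma> t = vderiv (\<lambda>s. vector_derivative \<gamma> (at s)) t"
    by (simp add: numeral_2_eq_2 vderiv_def)
  also have "\<dots> = vderiv (\<lambda>s. W s $ 1) t"
    by (rule vderiv_cong[OF I _ t]) (use W in \<open>simp add: is_frame_def\<close>)
  also have "\<dots> = vderiv W t $ 1"
    using W t by (intro vderiv_eqI bounded_linear.has_vector_derivative[OF bounded_linear_vec_nth]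
        smooth_on_has_vector_derivative) (auto simp: is_frame_def)
  also have "vderiv W t = coeff_matrix W t ** W t"
    using W t by (simp add: coeff_matrix_vderiv is_frame_def orthogonal_matrix
        matrix_mul_assoc[symmetric])
  finally show ?thesis .
qed

lemma coeff_matrix_row1_neq_zero:
  assumes "open I" and "is_frame I \<gamma> W" and "two_regular I \<gamma>" and "t \<in> I"
  shows "coeff_matrix W t $ 1 \<noteq> 0"
proof
  assume "coeff_matrix W t $ 1 = 0"
  then have "vderiv_n 2 \<gamma> t = 0"
    using vderiv_2_eq_coeff_matrix_row1[OF assms(1,2,4)]
    by (simp add: vec_eq_iff matrix_matrix_mult_def)
  then show False using assms(3,4) by (simp add: two_regular_def)
qed

section \<open>Bishop frames\<close>

lemma matrix_mult_entry_4:
  "((A::real^4^4) ** B) $ i $ j = A$i$1 * B$1$j + A$i$2 * B$2$j + A$i$3 * B$3$j + A$i$4 * B$4$j"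
  by (simp add: matrix_matrix_mult_def sum_4)

definition normal_projection :: "real^4^4" where
  "normal_projection = (\<chi> i j. if i = j \<and> i \<noteq> 1 then 1 else 0)"

lemma normal_projection_idem: "normal_projection ** normal_projection = normal_projection"
  by (simp add: vec_eq_iff forall_4 matrix_mult_entry_4 normal_projection_def)

lemma transpose_normal_projection: "transpose normal_projection = normal_projection"
  by (simp add: vec_eq_iff forall_4 transpose_def normal_projection_def)

lemma normal_projection_sandwich_entry:
  "(normal_projection ** M ** normal_projection) $ i $ j = (if i = 1 \<or> j = 1 then 0 else M $ i $ j)"
  using exhaust_4[of i] exhaust_4[of j]
  by (elim disjE) (simp_all add: matrix_mult_entry_4 normal_projection_def)

lemma orthogonal_matrix_col1_axis:
  assumes "orthogonal_matrix (R::real^4^4)" and "R $ 1 = axis 1 1" and "k \<noteq> 1"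
  shows "R $ k $ 1 = 0"
proof -
  have "(R ** transpose R) $ k $ 1 = R $ k $ 1"
    using assms(2) by (simp add: matrix_mult_entry_4 transpose_def axis_def)
  then show ?thesis using assms(1,3) by (simp add: orthogonal_matrix_def mat_def)
qed

lemma normal_block_zero_sandwich:
  fixes R Y :: "real^4^4"
  assumes R: "\<And>k. k \<noteq> 1 \<Longrightarrow> R $ k $ 1 = 0" and "normal_block_zero Y"
  shows "normal_block_zero (R ** Y ** transpose R)"
  unfolding normal_block_zero_def
proof (intro allI impI)
  fix i j :: 4 assume "i \<noteq> 1" "j \<noteq> 1"
  then show "(R ** Y ** transpose R) $ i $ j = 0"
    using R[of i] R[of j] assms(2)
    by (simp add: normal_block_zero_def matrix_mult_entry_4 transpose_def)
qed

lemma normal_rotation_ode_exists: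
  assumes I: "is_interval I" "open I" "t0 \<in> I"
    and A: "smooth_on I A" "\<forall>t\<in>I. transpose (A t) = - A t"
    and block: "\<forall>t\<in>I. normal_projection ** A t ** normal_projection = A t"
  obtains R where "normal_rotation I R" "\<forall>t\<in>I. vderiv R t = R t ** A t"
proof -
  let ?P = normal_projection
  obtain R0 where R0: "R0 t0 = mat 1" "\<forall>t\<in>I. (R0 has_vector_derivative R0 t ** A t) (at t)"
    using linear_matrix_ode_exists[OF I smooth_on_imp_continuous_on[OF A(1)]] by blast
  \<comment> \<open>projecting \<open>R0\<close> onto the normal block makes it fix the tangent without a uniqueness theorem\<close>
  define R where "R t = mat 1 - ?P + ?P ** R0 t ** ?P" for t
  have lin: "bounded_linear (\<lambda>M. ?P ** M ** ?P)"
    using bounded_linear_compose[OF bounded_bilinear.bounded_linear_left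
        bounded_bilinear.bounded_linear_right, OF bounded_bilinear_matrix_mult bounded_bilinear_matrix_mult]
    by blast
  have PA: "?P ** A t = A t" "A t ** ?P = A t" if "t \<in> I" for t
    using block that normal_projection_idem by (metis matrix_mul_assoc)+
  have R': "(R has_vector_derivative R t ** A t) (at t)" if t: "t \<in> I" for t
  proof -
    have "((\<lambda>s. mat 1 - ?P + ?P ** R0 s ** ?P) has_vector_derivative ?P ** (R0 t ** A t) ** ?P) (at t)"
      using has_vector_derivative_add[OF has_vector_derivative_const
          bounded_linear.has_vector_derivative[OF lin]] R0(2) t by fastforce
    also have "?P ** (R0 t ** A t) ** ?P = R t ** A t"
      using PA[OF t] by (simp add: R_def matrix_add_rdistrib matrix_diff_rdistrib matrix_mul_assoc[symmetric])
    finally show ?thesis unfolding R_def .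
  qed
  have "R t0 = mat 1" by (simp add: R_def R0(1) normal_projection_idem)
  then have "orthogonal_matrix (R t)" if "t \<in> I" for t
    using orthogonal_matrix_linear_ode[OF I(1,3) _ _ A(2) that, of R] orthogonal_matrix_id R'
    by simp
  moreover have "R t $ 1 = axis 1 1" for t
  proof -
    have "(?P ** R0 t ** ?P) $ 1 $ j = 0" for j by (simp add: normal_projection_sandwich_entry)
    then show ?thesis by (simp add: R_def vec_eq_iff normal_projection_def mat_def axis_def)
  qed
  moreover have "smooth_on I R"
    unfolding R_def[abs_def] using I(2) smooth_on_linear_matrix_ode[OF I(2) A(1)] R0(2)
    by (intro smooth_on_add smooth_on_const smooth_on_bounded_linear[OF lin]) auto
  ultimately have "normal_rotation I R" by (simp add: normal_rotation_def)
  then show ?thesis using that R' vderiv_eqI by blast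
qed

lemma bishop_frame_exists:
  assumes I: "is_interval I" "open I" "t0 \<in> I" and W: "is_frame I \<gamma> W"
  obtains W' where "is_frame I \<gamma> W'" "\<forall>t\<in>I. normal_block_zero (coeff_matrix W' t)"
proof -
  let ?P = normal_projection and ?X = "coeff_matrix W"
  define A where "A t = - (?P ** ?X t ** ?P)" for t
  have idem: "M ** ?P ** ?P = M ** ?P" for M
    by (simp add: matrix_mul_assoc[symmetric] normal_projection_idem)
  have "smooth_on I A"
    unfolding A_def[abs_def] using I(2) smooth_on_coeff_matrix[OF I(2) W]
    by (intro smooth_on_minus smooth_on_matrix_mult smooth_on_const) auto
  moreover have "\<forall>t\<in>I. transpose (A t) = - A t"
    using coeff_matrix_skew_symmetric[OF I(2)] W
    by (auto simp: is_frame_def A_def transpose_neg matrix_transpose_mul transpose_normal_projection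
        matrix_neg_left matrix_neg_right matrix_mul_assoc)
  moreover have "\<forall>t\<in>I. ?P ** A t ** ?P = A t"
    by (simp add: A_def matrix_neg_left matrix_neg_right matrix_mul_assoc normal_projection_idem idem)
  ultimately obtain R where R: "normal_rotation I R" "\<forall>t\<in>I. vderiv R t = R t ** A t"
    using normal_rotation_ode_exists[OF I] by blast
  have "normal_block_zero (coeff_matrix (\<lambda>t. R t ** W t) t)" if t: "t \<in> I" for t
  proof -
    have "coeff_matrix (\<lambda>t. R t ** W t) t = R t ** (A t + ?X t) ** transpose (R t)"
      using coeff_matrix_normal_rotation[OF I(2) W R(1) t] R(2) t
      by (simp add: matrix_add_ldistrib)
    moreover have "normal_block_zero (A t + ?X t)"
      by (simp add: normal_block_zero_def A_def normal_projection_sandwich_entry)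
    moreover have "R t $ k $ 1 = 0" if "k \<noteq> 1" for k
      using R(1) t that orthogonal_matrix_col1_axis by (auto simp: normal_rotation_def)
    ultimately show ?thesis using normal_block_zero_sandwich by metis
  qed
  then show ?thesis using that is_frame_normal_rotation[OF I(2) W R(1)] by blast
qed

lemma admits_TypeB_frame:
  assumes "is_interval I" "open I" "t0 \<in> I" and "is_frame I \<gamma> W"
  shows "admits_frame_of_type TypeB I \<gamma>"
  using bishop_frame_exists[OF assms] frame_of_TypeBI[OF assms(2)]
  unfolding admits_frame_of_type_def by metis

section \<open>Plane rotations and type D frames\<close>

definition plane_rotation :: "4 \<Rightarrow> 4 \<Rightarrow> real \<Rightarrow> real \<Rightarrow> real^4^4" where
  "plane_rotation p q c s = (\<chi> i j.
     if i = p \<and> j = p then c else if i = p \<and> j = q then s else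
     if i = q \<and> j = p then - s else if i = q \<and> j = q then c else if i = j then 1 else 0)"

lemma plane_rotation_affine:
  "p \<noteq> q \<Longrightarrow> plane_rotation p q c s = plane_rotation p q 0 0
     + c *\<^sub>R (plane_rotation p q 1 0 - plane_rotation p q 0 0)
     + s *\<^sub>R (plane_rotation p q 0 1 - plane_rotation p q 0 0)"
  by (auto simp: vec_eq_iff plane_rotation_def)

lemma has_vector_derivative_plane_rotation:
  assumes "p \<noteq> q" and "(c has_real_derivative c') (at t)" and "(s has_real_derivative s') (at t)"
  shows "((\<lambda>t. plane_rotation p q (c t) (s t)) has_vector_derivative
    plane_rotation p q c' s' - plane_rotation p q 0 0) (at t)"
proof -
  let ?R = "plane_rotation p q"
  have "((\<lambda>t. ?R 0 0 + c t *\<^sub>R (?R 1 0 - ?R 0 0) + s t *\<^sub>R (?R 0 1 - ?R 0 0)) has_vector_derivative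
      0 + (c t *\<^sub>R 0 + c' *\<^sub>R (?R 1 0 - ?R 0 0)) + (s t *\<^sub>R 0 + s' *\<^sub>R (?R 0 1 - ?R 0 0))) (at t)"
    by (intro has_vector_derivative_add has_vector_derivative_scaleR has_vector_derivative_const
        assms(2,3))
  moreover have "(\<lambda>t. ?R (c t) (s t))
      = (\<lambda>t. ?R 0 0 + c t *\<^sub>R (?R 1 0 - ?R 0 0) + s t *\<^sub>R (?R 0 1 - ?R 0 0))"
    by (rule ext) (rule plane_rotation_affine[OF assms(1)])
  moreover have "?R c' s' - ?R 0 0 = c' *\<^sub>R (?R 1 0 - ?R 0 0) + s' *\<^sub>R (?R 0 1 - ?R 0 0)"
    by (subst plane_rotation_affine[OF assms(1), of c' s']) simp
  ultimately show ?thesis by simp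
qed

lemma smooth_on_plane_rotation:
  assumes "p \<noteq> q" and "open S" and "smooth_on S c" and "smooth_on S s"
  shows "smooth_on S (\<lambda>t. plane_rotation p q (c t) (s t))"
proof -
  let ?R = "plane_rotation p q"
  have "smooth_on S (\<lambda>t. ?R 0 0 + c t *\<^sub>R (?R 1 0 - ?R 0 0) + s t *\<^sub>R (?R 0 1 - ?R 0 0))"
    using assms by (intro smooth_on_add smooth_on_scaleR smooth_on_const)
  then show ?thesis by (subst plane_rotation_affine[OF assms(1)])
qed

lemma orthogonal_matrix_plane_rotation:
  assumes "p \<noteq> q" and "c\<^sup>2 + s\<^sup>2 = 1"
  shows "orthogonal_matrix (plane_rotation p q c s)"
  unfolding orthogonal_matrix vec_eq_iff forall_4
  using exhaust_4[of p] exhaust_4[of q] assms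
  by (elim disjE) (simp_all add: matrix_mult_entry_4 transpose_def plane_rotation_def mat_def
      power2_eq_square)

lemma normal_rotation_plane_rotation:
  assumes "p \<noteq> q" "p \<noteq> 1" "q \<noteq> 1" and "open I" and "smooth_on I c" "smooth_on I s"
    and "\<forall>t\<in>I. (c t)\<^sup>2 + (s t)\<^sup>2 = 1"
  shows "normal_rotation I (\<lambda>t. plane_rotation p q (c t) (s t))"
  using assms smooth_on_plane_rotation orthogonal_matrix_plane_rotation
  by (auto simp: normal_rotation_def plane_rotation_def axis_def vec_eq_iff)

lemma rotation_34_gauge_entries:
  fixes a b c s x :: real
  assumes "c\<^sup>2 + s\<^sup>2 = 1"
  defines "N \<equiv> (plane_rotation 3 4 (s * x) (- c * x) - plane_rotation 3 4 0 0
      + plane_rotation 3 4 c s ** skew4 a 0 0 b 0 x) ** transpose (plane_rotation 3 4 c s)"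
  shows "N $1$3 = 0 \<and> N $1$4 = 0 \<and> N $3$4 = 0"
proof -
  have "x * s\<^sup>2 + x * c\<^sup>2 = x" using assms(1) by (simp add: distrib_left[symmetric])
  then show ?thesis
    unfolding N_def
    by (simp add: matrix_mult_entry_4 transpose_def plane_rotation_def skew4_def power2_eq_square
        algebra_simps)
qed

lemma admits_TypeD_frame:
  assumes I: "is_interval I" "open I" "t0 \<in> I" and W: "is_frame I \<gamma> W"
    and F: "\<forall>t\<in>I. coeff_matrix W t $1$3 = 0 \<and> coeff_matrix W t $1$4 = 0 \<and> coeff_matrix W t $2$4 = 0"
  shows "admits_frame_of_type TypeD I \<gamma>"
proof -
  let ?X = "coeff_matrix W"
  define x where "x t = ?X t $3$4" for t
  have x: "smooth_on I (\<lambda>t. - x t)"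
    unfolding x_def using smooth_on_minus[OF I(2) smooth_on_coeff_matrix_entry[OF I(2) W]] .
  define \<theta> where "\<theta> t = oriented_integral t0 t (\<lambda>s. - x s)" for t
  have \<theta>': "(\<theta> has_real_derivative - x t) (at t)" if "t \<in> I" for t
    unfolding \<theta>_def has_real_derivative_iff_has_vector_derivative
    using has_vector_derivative_oriented_integral[OF I that smooth_on_imp_continuous_on[OF x]] .
  have "smooth_on I \<theta>"
    using smooth_onI_has_vector_derivative[OF I(2) _ x] \<theta>'
    by (simp add: has_real_derivative_iff_has_vector_derivative)
  then have smooth: "smooth_on I (\<lambda>t. cos (\<theta> t))" "smooth_on I (\<lambda>t. sin (\<theta> t))"
    using smooth_on_compose[OF open_UNIV I(2)] smooth_on_cos smooth_on_sin by auto
  define R where "R t = plane_rotation 3 4 (cos (\<theta> t)) (sin (\<theta> t))" for t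
  have R: "normal_rotation I R"
    unfolding R_def[abs_def] by (rule normal_rotation_plane_rotation) (use I(2) smooth in auto)
  have R': "vderiv R t = plane_rotation 3 4 (sin (\<theta> t) * x t) (- cos (\<theta> t) * x t) - plane_rotation 3 4 0 0"
    if "t \<in> I" for t
    unfolding R_def[abs_def]
    by (rule vderiv_eqI, rule has_vector_derivative_plane_rotation)
      (auto intro!: derivative_eq_intros \<theta>'[OF that])
  have "coeff_matrix (\<lambda>t. R t ** W t) t $1$3 = 0 \<and> coeff_matrix (\<lambda>t. R t ** W t) t $1$4 = 0
      \<and> coeff_matrix (\<lambda>t. R t ** W t) t $3$4 = 0" if t: "t \<in> I" for t
  proof -
    have X: "?X t = skew4 (?X t $1$2) 0 0 (?X t $2$3) 0 (x t)"
      using coeff_matrix_skew4[OF I(2) W t] F t by (simp add: x_def)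
    have "coeff_matrix (\<lambda>t. R t ** W t) t
      = (plane_rotation 3 4 (sin (\<theta> t) * x t) (- cos (\<theta> t) * x t) - plane_rotation 3 4 0 0
          + plane_rotation 3 4 (cos (\<theta> t)) (sin (\<theta> t)) ** skew4 (?X t $1$2) 0 0 (?X t $2$3) 0 (x t))
        ** transpose (plane_rotation 3 4 (cos (\<theta> t)) (sin (\<theta> t)))"
      unfolding coeff_matrix_normal_rotation[OF I(2) W R t] R'[OF t] by (subst X) (simp add: R_def)
    then show ?thesis using rotation_34_gauge_entries[of "cos (\<theta> t)" "sin (\<theta> t)"] by simp
  qed
  then show ?thesis
    using frame_of_TypeDI[OF I(2) is_frame_normal_rotation[OF I(2) W R]]
    unfolding admits_frame_of_type_def by blast
qed

section \<open>Type C frames\<close>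

lemma negligible_planes_along_curve:
  fixes a :: "real \<Rightarrow> real^4" and e :: "real^4"
  assumes "\<forall>t\<in>I. a differentiable at t"
  shows "negligible {r *\<^sub>R a t + s *\<^sub>R e | t r s. t \<in> I}"
proof -
  define f :: "real \<times> real \<times> real \<Rightarrow> real^4" where
    "f x = fst (snd x) *\<^sub>R a (fst x) + snd (snd x) *\<^sub>R e" for x
  have "f differentiable_on (I \<times> UNIV)"
  proof (rule differentiable_at_imp_differentiable_on)
    fix x :: "real \<times> real \<times> real" assume "x \<in> I \<times> UNIV"
    then have "a differentiable at (fst x)" using assms by auto
    then have "(\<lambda>x. a (fst x)) differentiable at x"
      using differentiable_compose bounded_linear_imp_differentiable[OF bounded_linear_fst] by blast
    moreover have "(\<lambda>x. fst (snd x)) differentiable at x" "(\<lambda>x. snd (snd x)) differentiable at x"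
      by (auto intro!: bounded_linear_imp_differentiable bounded_linear_compose[of fst snd]
          bounded_linear_compose[of snd snd] bounded_linear_fst bounded_linear_snd)
    ultimately show "f differentiable at x"
      unfolding f_def by (intro differentiable_add differentiable_scaleR differentiable_const)
  qed
  then have "negligible (f ` (I \<times> UNIV))"
    by (intro negligible_differentiable_image_lowdim) auto
  moreover have "{r *\<^sub>R a t + s *\<^sub>R e | t r s. t \<in> I} \<subseteq> f ` (I \<times> UNIV)"
    by (auto simp: f_def intro!: image_eqI[where x="(t, r, s)" for t r s])
  ultimately show ?thesis by (rule negligible_subset)
qed

lemma exists_normal_direction_avoiding_curve:
  fixes a :: "real \<Rightarrow> real^4"
  assumes "\<forall>t\<in>I. a differentiable at t"
  obtains c where "c $ 1 = 0" "norm c = 1" "c \<noteq> axis 3 1" "\<forall>t\<in>I. \<forall>r. c \<noteq> r *\<^sub>R a t"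
proof -
  let ?E = "{r *\<^sub>R a t + s *\<^sub>R axis 1 1 | t r s. t \<in> I}"
    and ?E3 = "{r *\<^sub>R axis 3 1 + s *\<^sub>R axis 1 1 | t r s. t \<in> (UNIV :: real set)}"
  define N where "N = ?E \<union> ?E3"
  have "negligible N"
    unfolding N_def using assms by (intro negligible_Un negligible_planes_along_curve) auto
  then have "N \<noteq> UNIV" using non_negligible_UNIV by blast
  then obtain v where "v \<notin> N" by blast
  then have v: "v \<notin> ?E" "v \<notin> ?E3" unfolding N_def by blast+
  define u where "u = v - (v $ 1) *\<^sub>R axis 1 1"
  have v_eq: "v = u + (v $ 1) *\<^sub>R axis 1 1" by (simp add: u_def)
  have "u \<noteq> 0"
  proof
    assume "u = 0"
    then have "v = 0 *\<^sub>R axis 3 1 + (v $ 1) *\<^sub>R axis 1 1" using v_eq by simp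
    then show False using v(2) by blast
  qed
  define c where "c = u /\<^sub>R norm u"
  have v_c: "v = norm u *\<^sub>R c + (v $ 1) *\<^sub>R axis 1 1" using v_eq \<open>u \<noteq> 0\<close> by (simp add: c_def)
  show ?thesis
  proof (rule that)
    show "c $ 1 = 0" by (simp add: c_def u_def)
    show "norm c = 1" using \<open>u \<noteq> 0\<close> by (simp add: c_def)
    show "c \<noteq> axis 3 1" using v(2) v_c by blast
    show "\<forall>t\<in>I. \<forall>r. c \<noteq> r *\<^sub>R a t"
    proof (intro ballI allI notI)
      fix t r assume "t \<in> I" and "c = r *\<^sub>R a t"
      then have "v = (norm u * r) *\<^sub>R a t + (v $ 1) *\<^sub>R axis 1 1" using v_c by simp
      then show False using v(1) \<open>t \<in> I\<close> by blast
    qed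
  qed
qed

definition householder :: "real^'n \<Rightarrow> real^'n^'n" where
  "householder v = mat 1 - (2 / (v \<bullet> v)) *\<^sub>R (\<chi> i j. v $ i * v $ j)"

lemma householder_mult_vector: "householder v *v x = x - (2 * (v \<bullet> x) / (v \<bullet> v)) *\<^sub>R v"
proof -
  have "(\<chi> i j. v $ i * v $ j) *v x = (v \<bullet> x) *\<^sub>R v"
    by (simp add: matrix_vector_mult_def vec_eq_iff inner_vec_def sum_distrib_left mult_ac)
  then show ?thesis
    by (simp add: householder_def matrix_vector_mult_diff_rdistrib scaleR_matrix_vector_assoc[symmetric])
qed

lemma transpose_householder: "transpose (householder v) = householder v"
  by (simp add: householder_def transpose_def vec_eq_iff mat_def mult.commute)

lemma householder_involution:
  assumes "v \<noteq> 0" shows "householder v ** householder v = mat 1"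
proof -
  have "householder v *v (householder v *v x) = x" for x
    using assms by (simp add: householder_mult_vector inner_diff_right field_simps)
  then show ?thesis by (simp add: matrix_eq matrix_vector_mul_assoc)
qed

lemma orthogonal_matrix_householder: "v \<noteq> 0 \<Longrightarrow> orthogonal_matrix (householder v)"
  by (simp add: orthogonal_matrix transpose_householder householder_involution)

lemma householder_exchange:
  fixes c u :: "real^'n"
  assumes "norm c = 1" and "norm u = 1" and "c \<noteq> u"
  shows "householder (c - u) *v u = c"
proof -
  have "c \<bullet> c = 1" "u \<bullet> u = 1" using assms(1,2) by (simp_all add: dot_square_norm)
  then have vv: "(c - u) \<bullet> (c - u) = 2 - 2 * (c \<bullet> u)" and vu: "(c - u) \<bullet> u = c \<bullet> u - 1"
    by (simp_all add: inner_diff_left inner_diff_right inner_commute)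
  then have "c \<bullet> u \<noteq> 1" using assms(3) by auto
  then have "2 * ((c - u) \<bullet> u) / ((c - u) \<bullet> (c - u)) = -1" by (simp add: vv vu field_simps)
  then show ?thesis by (simp add: householder_mult_vector)
qed

lemma householder_row1: "v $ 1 = 0 \<Longrightarrow> householder (v::real^4) $ 1 = axis 1 1"
  by (simp add: householder_def vec_eq_iff mat_def axis_def)

lemma matrix_sandwich_row1:
  fixes H M :: "real^4^4"
  assumes "H $ 1 = axis 1 1"
  shows "(H ** M ** transpose H) $ 1 = H *v (M $ 1)"
  using matrix_mult_row1_axis[OF assms, of M]
  by (simp add: vec_eq_iff matrix_mult_entry_4 transpose_def matrix_vector_mult_def sum_4 mult.commute)

lemma transversal_bishop_frame_exists:
  assumes I: "open I" and W: "is_frame I \<gamma> W" and reg: "two_regular I \<gamma>"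
    and B: "\<forall>t\<in>I. normal_block_zero (coeff_matrix W t)"
  obtains W' where "is_frame I \<gamma> W'" "\<forall>t\<in>I. normal_block_zero (coeff_matrix W' t)"
    "\<forall>t\<in>I. coeff_matrix W' t $1$2 \<noteq> 0 \<or> coeff_matrix W' t $1$4 \<noteq> 0"
proof -
  let ?X = "coeff_matrix W"
  have "\<forall>t\<in>I. (\<lambda>s. ?X s $ 1) differentiable at t"
    using smooth_on_has_vector_derivative[OF smooth_on_vec_nth[OF I smooth_on_coeff_matrix[OF I W]]]
    by (metis differentiableI_vector)
  then obtain c where c: "c $ 1 = 0" "norm c = 1" "c \<noteq> axis 3 1" "\<forall>t\<in>I. \<forall>r. c \<noteq> r *\<^sub>R ?X t $ 1"
    by (rule exists_normal_direction_avoiding_curve)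
  define v where "v = c - axis 3 1"
  define H where "H = householder v"
  have v: "v \<noteq> 0" "v $ 1 = 0" using c by (auto simp: v_def axis_def)
  then have H_orth: "orthogonal_matrix H" "H $ 1 = axis 1 1" "H ** H = mat 1"
    by (simp_all add: H_def orthogonal_matrix_householder householder_row1 householder_involution)
  then have H: "normal_rotation I (\<lambda>t. H)"
    using I by (simp add: normal_rotation_def smooth_on_const)
  have "H *v axis 3 1 = c"
    unfolding H_def v_def using c(2,3) by (intro householder_exchange) auto
  have H_col1: "H $ k $ 1 = 0" if "k \<noteq> 1" for k
    using orthogonal_matrix_col1_axis[OF H_orth(1,2) that] .
  define W' where "W' = (\<lambda>t. H ** W t)"
  have W': "is_frame I \<gamma> W'" unfolding W'_def using is_frame_normal_rotation[OF I W H] .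
  have X': "coeff_matrix W' t = H ** ?X t ** transpose H" if "t \<in> I" for t
    using coeff_matrix_normal_rotation[OF I W H that] by (simp add: W'_def)
  have "coeff_matrix W' t $1$2 \<noteq> 0 \<or> coeff_matrix W' t $1$4 \<noteq> 0" if t: "t \<in> I" for t
  proof (rule ccontr)
    assume zero: "\<not> ?thesis"
    define a where "a = coeff_matrix W' t $ 1"
    have "a $ 1 = 0" unfolding a_def by (subst coeff_matrix_skew4[OF I W' t]) (simp add: skew4_def)
    then have "a = (a $ 3) *\<^sub>R axis 3 1"
      using zero by (simp add: a_def vec_eq_iff forall_4 axis_def)
    moreover have "a = H *v (?X t $ 1)"
      unfolding a_def X'[OF t] using matrix_sandwich_row1[OF H_orth(2)] .
    ultimately have "?X t $ 1 = (a $ 3) *\<^sub>R c"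
      using H_orth(3) \<open>H *v axis 3 1 = c\<close>
      by (metis matrix_vector_mul_assoc matrix_vector_mul_lid matrix_vector_mult_scaleR)
    moreover have "?X t $ 1 \<noteq> 0" using coeff_matrix_row1_neq_zero[OF I W reg t] .
    ultimately have "c = (1 / a $ 3) *\<^sub>R ?X t $ 1" by auto
    then show False using c(4) t by blast
  qed
  moreover have "normal_block_zero (coeff_matrix W' t)" if "t \<in> I" for t
    using normal_block_zero_sandwich[OF H_col1 B[rule_format, OF that]] X'[OF that] by simp
  ultimately show ?thesis using that W' by blast
qed

lemma rotation_24_gauge_entries:
  fixes b1 b2 b3 c s c' s' :: real
  assumes "c * b3 = s * b1"
  defines "N \<equiv> (plane_rotation 2 4 c' s' - plane_rotation 2 4 0 0
      + plane_rotation 2 4 c s ** skew4 b1 b2 b3 0 0 0) ** transpose (plane_rotation 2 4 c s)"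
  shows "N $1$4 = 0 \<and> N $2$3 = 0 \<and> N $3$4 = 0"
  using assms(1) unfolding N_def
  by (simp add: matrix_mult_entry_4 transpose_def plane_rotation_def skew4_def algebra_simps)

lemma smooth_unit_direction_exists:
  fixes b1 b2 :: "real \<Rightarrow> real"
  assumes I: "open I" and b: "smooth_on I b1" "smooth_on I b2"
    and nonzero: "\<forall>t\<in>I. b1 t \<noteq> 0 \<or> b2 t \<noteq> 0"
  obtains c s where "smooth_on I c" "smooth_on I s" "\<forall>t\<in>I. (c t)\<^sup>2 + (s t)\<^sup>2 = 1"
    "\<forall>t. c t * b2 t = s t * b1 t"
proof -
  define q where "q t = b1 t * b1 t + b2 t * b2 t" for t
  have q_pos: "q t > 0" if "t \<in> I" for t
    using nonzero that by (simp add: q_def sum_squares_gt_zero_iff)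
  have "smooth_on I q" unfolding q_def[abs_def] using I b by (intro smooth_on_add smooth_on_mult)
  then have "smooth_on I (\<lambda>t. q t powr (-1/2))"
    using smooth_on_compose[OF open_greaterThan I smooth_on_powr] q_pos by simp
  then have "smooth_on I (\<lambda>t. b1 t * q t powr (-1/2))" "smooth_on I (\<lambda>t. b2 t * q t powr (-1/2))"
    using I b by (auto intro: smooth_on_mult)
  moreover have "(b1 t * q t powr (-1/2))\<^sup>2 + (b2 t * q t powr (-1/2))\<^sup>2 = 1" if "t \<in> I" for t
  proof -
    have "(b1 t * q t powr (-1/2))\<^sup>2 + (b2 t * q t powr (-1/2))\<^sup>2
        = q t * (q t powr (-1/2) * q t powr (-1/2))"
      by (simp add: q_def power2_eq_square algebra_simps)
    also have "\<dots> = 1"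
      using q_pos[OF that] by (simp add: powr_add[symmetric] powr_minus_divide)
    finally show ?thesis .
  qed
  ultimately show ?thesis
    by (intro that[of "\<lambda>t. b1 t * q t powr (-1/2)" "\<lambda>t. b2 t * q t powr (-1/2)"]) auto
qed

lemma admits_TypeC_frame_of_transversal_bishop:
  assumes I: "open I" and W: "is_frame I \<gamma> W"
    and B: "\<forall>t\<in>I. normal_block_zero (coeff_matrix W t)"
    and transversal: "\<forall>t\<in>I. coeff_matrix W t $1$2 \<noteq> 0 \<or> coeff_matrix W t $1$4 \<noteq> 0"
  shows "admits_frame_of_type TypeC I \<gamma>"
proof -
  let ?X = "coeff_matrix W"
  obtain c s where cs: "smooth_on I c" "smooth_on I s" "\<forall>t\<in>I. (c t)\<^sup>2 + (s t)\<^sup>2 = 1"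
    and proportional: "\<forall>t. c t * ?X t $1$4 = s t * ?X t $1$2"
    using smooth_unit_direction_exists[OF I smooth_on_coeff_matrix_entry[OF I W]
        smooth_on_coeff_matrix_entry[OF I W] transversal] .
  have R: "normal_rotation I (\<lambda>t. plane_rotation 2 4 (c t) (s t))"
    using normal_rotation_plane_rotation[OF _ _ _ I cs] by simp
  have "coeff_matrix (\<lambda>t. plane_rotation 2 4 (c t) (s t) ** W t) t $1$4 = 0
      \<and> coeff_matrix (\<lambda>t. plane_rotation 2 4 (c t) (s t) ** W t) t $2$3 = 0
      \<and> coeff_matrix (\<lambda>t. plane_rotation 2 4 (c t) (s t) ** W t) t $3$4 = 0" if t: "t \<in> I" for t
  proof -
    have X: "?X t = skew4 (?X t $1$2) (?X t $1$3) (?X t $1$4) 0 0 0"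
      using coeff_matrix_skew4[OF I W t] B t by (simp add: normal_block_zero_def)
    have "vderiv (\<lambda>t. plane_rotation 2 4 (c t) (s t)) t
        = plane_rotation 2 4 (vderiv c t) (vderiv s t) - plane_rotation 2 4 0 0"
      using smooth_on_has_vector_derivative[OF cs(1) t] smooth_on_has_vector_derivative[OF cs(2) t]
      by (intro vderiv_eqI has_vector_derivative_plane_rotation)
        (simp_all add: has_real_derivative_iff_has_vector_derivative)
    then have "coeff_matrix (\<lambda>t. plane_rotation 2 4 (c t) (s t) ** W t) t
      = (plane_rotation 2 4 (vderiv c t) (vderiv s t) - plane_rotation 2 4 0 0
          + plane_rotation 2 4 (c t) (s t) ** skew4 (?X t $1$2) (?X t $1$3) (?X t $1$4) 0 0 0)
        ** transpose (plane_rotation 2 4 (c t) (s t))"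
      unfolding coeff_matrix_normal_rotation[OF I W R t] by (subst X) simp
    then show ?thesis using rotation_24_gauge_entries proportional by simp
  qed
  then show ?thesis
    using frame_of_TypeCI[OF I is_frame_normal_rotation[OF I W R]]
    unfolding admits_frame_of_type_def by blast
qed

lemma admits_TypeC_frame:
  assumes "is_interval I" "open I" "t0 \<in> I" and "is_frame I \<gamma> W" and "two_regular I \<gamma>"
  shows "admits_frame_of_type TypeC I \<gamma>"
proof -
  obtain WB where "is_frame I \<gamma> WB" "\<forall>t\<in>I. normal_block_zero (coeff_matrix WB t)"
    using bishop_frame_exists assms by metis
  then obtain WT where "is_frame I \<gamma> WT" "\<forall>t\<in>I. normal_block_zero (coeff_matrix WT t)"
    "\<forall>t\<in>I. coeff_matrix WT t $1$2 \<noteq> 0 \<or> coeff_matrix WT t $1$4 \<noteq> 0"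
    using transversal_bishop_frame_exists assms(2,5) by metis
  then show ?thesis using admits_TypeC_frame_of_transversal_bishop assms(2) by blast
qed

theorem corollary2:
  fixes I :: "real set" and \<gamma> :: "real \<Rightarrow> real^4"
  assumes "unit_speed_curve I \<gamma>" and "two_regular I \<gamma>"
  shows "(admits_frame_of_type TypeF I \<gamma> \<longrightarrow>
            admits_frame_of_type TypeB I \<gamma> \<and> admits_frame_of_type TypeC I \<gamma> \<and>
            admits_frame_of_type TypeD I \<gamma>)
       \<and> (admits_frenet_frame I \<gamma> \<longrightarrow>
            admits_frame_of_type TypeB I \<gamma> \<and> admits_frame_of_type TypeC I \<gamma> \<and>
            admits_frame_of_type TypeD I \<gamma>)"
proof -
  obtain t0 where I: "is_interval I" "open I" "t0 \<in> I"
    using assms(1) by (auto simp: unit_speed_curve_def open_interval_def)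
  have "admits_frame_of_type TypeF I \<gamma>" if "admits_frenet_frame I \<gamma>"
    using that frame_of_typeI
    unfolding admits_frenet_frame_def is_frenet_frame_def admits_frame_of_type_def by metis
  moreover have "admits_frame_of_type TypeB I \<gamma> \<and> admits_frame_of_type TypeC I \<gamma> \<and>
      admits_frame_of_type TypeD I \<gamma>" if F: "admits_frame_of_type TypeF I \<gamma>"
  proof -
    obtain Z where "frame_of_type TypeF I \<gamma> Z"
      using F unfolding admits_frame_of_type_def by blast
    then obtain W x1 x2 x3 where W: "is_frame I \<gamma> W"
      and "\<forall>t\<in>I. coeff_matrix W t = type_form TypeF (x1 t) (x2 t) (x3 t)"
      using frame_of_typeE[OF I(2)] by metis
    then have "\<forall>t\<in>I. coeff_matrix W t $1$3 = 0 \<and> coeff_matrix W t $1$4 = 0 \<and> coeff_matrix W t $2$4 = 0"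
      by (simp add: skew4_def)
    then show ?thesis
      using admits_TypeB_frame[OF I W] admits_TypeC_frame[OF I W assms(2)] admits_TypeD_frame[OF I W]
      by blast
  qed
  ultimately show ?thesis by blast
qed

end
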